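(* Let $|\psi\rangle=\sum_{n\ge0}\sqrt{p_n}|n\rangle$ and $|\phi\rangle=\sum_{n\ge0}\sqrt{q_n}|n\rangle$ be states of $\mathcal{H}'$, where $p_n,q_n\ge0$ and $\sum_np_n=\sum_nq_n=1$. There exists a deterministic (trace-preserving) U(1)-invariant operation $\mathcal{E}$ with $\mathcal{E}(|\psi\rangle\langle\psi|)=|\phi\rangle\langle\phi|$ if and only if there is a probability distribution $(w_k)_{k\in\mathbb{Z}}$ (i.e. $0\le w_k\le1$, $\sum_kw_k=1$) such that $$\vec p=\sum_{k=-\infty}^{\infty}w_k\Upsilon_k\vec q,$$ where $\vec p=(p_n)_{n\ge0}$, $\vec q=(q_n)_{n\ge0}$, and $\Upsilon_k$ is the shift defined by $(\Upsilon_k\vec q)_{m}=q_{m-k}$ for $m\ge0$ (with $q_{x}:=0$ for $x<0$).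
   Context: Let $\mathcal{H}'$ be the Hilbert space with orthonormal basis $\{|n\rangle: n=0,1,2,\dots\}$, let $\hat N=\sum_n n|n\rangle\langle n|$, and let U(1) act by $T(\phi)=e^{i\phi\hat N}$. A U(1)-invariant operation is a completely positive, trace-nonincreasing linear map $\mathcal{E}$ on operators on $\mathcal{H}'$ with $\mathcal{E}(T(\phi)XT(\phi)^\dagger)=T(\phi)\mathcal{E}(X)T(\phi)^\dagger$ for all $\phi,X$; it is deterministic if it is trace-preserving. *)

theory Defs
  imports "HOL-Analysis.Analysis"
begin

text \<open>Operators on the Hilbert space H' = l2(nat) with orthonormal basis |n>, represented
  by their matrices in that basis: X i j = <i|X|j>.\<close>

type_synonym mat = "nat \<Rightarrow> nat \<Rightarrow> complex"

definition hilbert_schmidt :: "mat \<Rightarrow> bool" where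
  "hilbert_schmidt B \<longleftrightarrow> (\<lambda>(i,j). (cmod (B i j))^2) summable_on UNIV"

text \<open>Trace class = products of two Hilbert-Schmidt operators (X = B^dagger C).\<close>
definition trace_class :: "mat \<Rightarrow> bool" where
  "trace_class X \<longleftrightarrow> (\<exists>B C. hilbert_schmidt B \<and> hilbert_schmidt C \<and>
      (\<forall>i j. X i j = (\<Sum>\<^sub>\<infinity>k. cnj (B k i) * C k j)))"

definition mtrace :: "mat \<Rightarrow> complex" where
  "mtrace X = (\<Sum>\<^sub>\<infinity>i. X i i)"

text \<open>Positivity of an n x n block matrix of operators, i.e. of an operator on
  C^n (tensor) H': nonnegative expectation on all finitely supported vectors.\<close>
definition block_pos :: "nat \<Rightarrow> (nat \<Rightarrow> nat \<Rightarrow> mat) \<Rightarrow> bool" where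
  "block_pos n Y \<longleftrightarrow> (\<forall>S v. finite S \<longrightarrow>
     (let z = (\<Sum>a<n. \<Sum>b<n. \<Sum>i\<in>S. \<Sum>j\<in>S. cnj (v a i) * Y a b i j * v b j)
      in Im z = 0 \<and> 0 \<le> Re z))"

definition mat_pos :: "mat \<Rightarrow> bool" where
  "mat_pos X \<longleftrightarrow> block_pos 1 (\<lambda>a b. X)"

text \<open>Conjugation by T(phi) = exp(i phi N): entries get multiplied by exp(i phi (m - n)).\<close>
definition rot :: "real \<Rightarrow> mat \<Rightarrow> mat" where
  "rot \<phi> X = (\<lambda>m n. cis (\<phi> * real m) * X m n * cnj (cis (\<phi> * real n)))"

definition u1_operation :: "(mat \<Rightarrow> mat) \<Rightarrow> bool" where
  "u1_operation E \<longleftrightarrow>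
     (\<forall>X. trace_class X \<longrightarrow> trace_class (E X)) \<and>
     (\<forall>X Y. trace_class X \<longrightarrow> trace_class Y \<longrightarrow>
         E (\<lambda>i j. X i j + Y i j) = (\<lambda>i j. E X i j + E Y i j)) \<and>
     (\<forall>X c. trace_class X \<longrightarrow> E (\<lambda>i j. c * X i j) = (\<lambda>i j. c * E X i j)) \<and>
     (\<forall>n Y. (\<forall>a<n. \<forall>b<n. trace_class (Y a b)) \<longrightarrow> block_pos n Y \<longrightarrow>
         block_pos n (\<lambda>a b. E (Y a b))) \<and>
     (\<forall>X. trace_class X \<longrightarrow> mat_pos X \<longrightarrow> Re (mtrace (E X)) \<le> Re (mtrace X)) \<and>
     (\<forall>\<phi> X. trace_class X \<longrightarrow> E (rot \<phi> X) = rot \<phi> (E X))"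

definition deterministic_u1_operation :: "(mat \<Rightarrow> mat) \<Rightarrow> bool" where
  "deterministic_u1_operation E \<longleftrightarrow> u1_operation E \<and>
     (\<forall>X. trace_class X \<longrightarrow> mtrace (E X) = mtrace X)"

text \<open>|psi><psi| for psi = sum_n sqrt(p n) |n>.\<close>
definition sqrt_state_proj :: "(nat \<Rightarrow> real) \<Rightarrow> mat" where
  "sqrt_state_proj p = (\<lambda>m n. complex_of_real (sqrt (p m) * sqrt (p n)))"

definition shift_vec :: "int \<Rightarrow> (nat \<Rightarrow> real) \<Rightarrow> nat \<Rightarrow> real" where
  "shift_vec k q m = (if int m - k \<ge> 0 then q (nat (int m - k)) else 0)"

end

theory Submission
  imports Defs
begin

text \<open>
  Write \<open>T(i, n) = \<langle>i|E(|n\<rangle>\<langle>n|)|i\<rangle>\<close>. Covariance is a selection rule: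
  \<open>\<langle>i|E(|a\<rangle>\<langle>b|)|j\<rangle> = 0\<close> unless \<open>i - j = a - b\<close>. Since \<open>E\<close> maps \<open>|\<psi>\<rangle>\<langle>\<psi>|\<close>
  to the pure state \<open>|\<phi>\<rangle>\<langle>\<phi>|\<close>, complete positivity makes every column of
  \<open>E(|\<psi>\<rangle>\<langle>n|)\<close> a multiple of \<open>\<phi>\<close>; combined with the Cauchy-Schwarz inequality for
  \<open>E(|a\<rangle>\<langle>b|)\<close> this gives the detailed balance \<open>q(i0) p(n) T(i, n) = q(i) p(n') T(i0, n')\<close>
  whenever \<open>n - i = n' - i0\<close>. Fixing \<open>i0\<close> with \<open>q(i0) > 0\<close> yields
  \<open>p(n) T(i, n) = w(n - i) q(i)\<close>, and summing over \<open>i\<close> (trace preservation) gives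
  \<open>p = \<Sum>\<^sub>k w(k) \<Upsilon>\<^sub>k q\<close>.

  Conversely, the Kraus operators \<open>K\<^sub>k|n\<rangle> = sqrt(w(k) q(n - k) / p(n)) |n - k\<rangle>\<close> lower the
  charge by \<open>k\<close>, so the channel they define is covariant; \<open>\<Sum>\<^sub>k K\<^sub>k\<^sup>\<dagger> K\<^sub>k = 1\<close> is exactly the
  hypothesis on \<open>p\<close>, and \<open>K\<^sub>k \<psi> = sqrt(w(k)) \<phi>\<close>.
\<close>

section \<open>Square-summable vectors and rank-one operators\<close>

definition square_summable :: "(nat \<Rightarrow> complex) \<Rightarrow> bool" where
  "square_summable x \<longleftrightarrow> (\<lambda>i. (cmod (x i))^2) summable_on UNIV"

definition sq_norm :: "(nat \<Rightarrow> complex) \<Rightarrow> real" where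
  "sq_norm x = (\<Sum>\<^sub>\<infinity>i. (cmod (x i))^2)"

definition outer :: "(nat \<Rightarrow> complex) \<Rightarrow> (nat \<Rightarrow> complex) \<Rightarrow> mat" where
  "outer x y = (\<lambda>i j. x i * cnj (y j))"

definition ket :: "nat \<Rightarrow> nat \<Rightarrow> complex" where
  "ket a = (\<lambda>i. if i = a then 1 else 0)"

definition amp :: "(nat \<Rightarrow> real) \<Rightarrow> nat \<Rightarrow> complex" where
  "amp p = (\<lambda>i. complex_of_real (sqrt (p i)))"

definition trunc :: "nat \<Rightarrow> (nat \<Rightarrow> complex) \<Rightarrow> nat \<Rightarrow> complex" where
  "trunc N x = (\<lambda>a. if a < N then x a else 0)"

definition tail :: "nat \<Rightarrow> (nat \<Rightarrow> complex) \<Rightarrow> nat \<Rightarrow> complex" where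
  "tail N x = (\<lambda>a. if a < N then 0 else x a)"

lemma infsum_if_eq: "(\<Sum>\<^sub>\<infinity>k. if k = a then f k else (0::'b::{comm_monoid_add,t2_space})) = f a"
proof -
  have "(\<Sum>\<^sub>\<infinity>k. if k = a then f k else 0) = (\<Sum>\<^sub>\<infinity>k\<in>{a}. if k = a then f k else 0)"
    by (rule infsum_cong_neutral) auto
  then show ?thesis by simp
qed

lemma has_sum_sum:
  fixes f :: "'a \<Rightarrow> 'b \<Rightarrow> 'c::topological_comm_monoid_add"
  assumes "finite A" "\<And>a. a \<in> A \<Longrightarrow> (f a has_sum s a) U"
  shows "((\<lambda>k. \<Sum>a\<in>A. f a k) has_sum (\<Sum>a\<in>A. s a)) U"
  using assms by (induction A rule: finite_induct) (auto intro: has_sum_add)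

lemma summable_on_cnj_mult:
  fixes b c :: "'a \<Rightarrow> complex"
  assumes "(\<lambda>x. (cmod (b x))^2) summable_on A" "(\<lambda>x. (cmod (c x))^2) summable_on A"
  shows "(\<lambda>x. cnj (b x) * c x) summable_on A"
proof -
  have "(\<lambda>x. (1/2) * ((cmod (b x))^2 + (cmod (c x))^2)) summable_on A"
    using assms by (intro summable_on_cmult_right summable_on_add)
  moreover have "norm (cnj (b x) * c x) \<le> (1/2) * ((cmod (b x))^2 + (cmod (c x))^2)" for x
    using sum_squares_bound[of "cmod (b x)" "cmod (c x)"] by (simp add: norm_mult)
  ultimately have "(\<lambda>x. norm (cnj (b x) * c x)) summable_on A"
    by (rule Infinite_Sum.abs_summable_on_comparison_test')
  then show ?thesis by (rule abs_summable_summable)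
qed

lemma square_summable_mono:
  "square_summable x \<Longrightarrow> (\<And>a. cmod (y a) \<le> cmod (x a)) \<Longrightarrow> square_summable y"
  unfolding square_summable_def by (rule summable_on_comparison_test) (auto intro: power_mono)

lemma square_summable_finite_support:
  assumes "finite S" "\<And>a. a \<notin> S \<Longrightarrow> x a = 0"
  shows "square_summable x"
proof -
  have "(\<lambda>i. (cmod (x i))^2) summable_on S" using assms(1) by simp
  then show ?thesis
    unfolding square_summable_def
    by (rule summable_on_cong_neutral[THEN iffD1, rotated -1]) (use assms(2) in auto)
qed

lemma square_summable_trunc: "square_summable (trunc N x)"
  by (rule square_summable_finite_support[of "{..<N}"]) (auto simp: trunc_def)

lemma square_summable_ket: "square_summable (ket a)"
  by (rule square_summable_finite_support[of "{a}"]) (auto simp: ket_def)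

lemma square_summable_tail: "square_summable x \<Longrightarrow> square_summable (tail N x)"
  by (erule square_summable_mono) (auto simp: tail_def)

lemma square_summable_scale: "square_summable x \<Longrightarrow> square_summable (\<lambda>a. c * x a)"
  unfolding square_summable_def by (simp add: norm_mult power_mult_distrib summable_on_cmult_right)

lemma sq_norm_nonneg: "0 \<le> sq_norm x"
  unfolding sq_norm_def by (rule infsum_nonneg) simp

lemma sq_norm_ket: "sq_norm (ket a) = 1"
proof -
  have "sq_norm (ket a) = (\<Sum>\<^sub>\<infinity>i\<in>{a}. (cmod (ket a i))^2)"
    unfolding sq_norm_def by (rule infsum_cong_neutral) (auto simp: ket_def)
  then show ?thesis by (simp add: ket_def)
qed

lemma sq_norm_trunc_le: "square_summable x \<Longrightarrow> sq_norm (trunc N x) \<le> sq_norm x"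
  unfolding sq_norm_def
  by (rule infsum_mono[OF square_summable_trunc[unfolded square_summable_def]])
     (auto simp: trunc_def square_summable_def)

lemma sq_norm_tail:
  assumes "square_summable x"
  shows "sq_norm (tail N x) = sq_norm x - (\<Sum>a<N. (cmod (x a))^2)"
proof -
  have "sq_norm x = (\<Sum>\<^sub>\<infinity>a\<in>{..<N} \<union> {N..}. (cmod (x a))^2)"
    unfolding sq_norm_def by (rule arg_cong[where f = "infsum _"]) auto
  also have "\<dots> = (\<Sum>\<^sub>\<infinity>a\<in>{..<N}. (cmod (x a))^2) + (\<Sum>\<^sub>\<infinity>a\<in>{N..}. (cmod (x a))^2)"
    using assms unfolding square_summable_def
    by (intro infsum_Un_disjoint) (auto intro: summable_on_subset_banach)
  also have "(\<Sum>\<^sub>\<infinity>a\<in>{N..}. (cmod (x a))^2) = sq_norm (tail N x)"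
    unfolding sq_norm_def by (rule infsum_cong_neutral) (auto simp: tail_def)
  finally show ?thesis by simp
qed

lemma sq_norm_tail_tendsto_0:
  assumes "square_summable x"
  shows "(\<lambda>N. sq_norm (tail N x)) \<longlonglongrightarrow> 0"
proof -
  have "(\<lambda>a. (cmod (x a))^2) sums sq_norm x"
    using assms unfolding square_summable_def sq_norm_def by (intro has_sum_imp_sums) simp
  then have "(\<lambda>N. sq_norm x - (\<Sum>a<N. (cmod (x a))^2)) \<longlonglongrightarrow> sq_norm x - sq_norm x"
    unfolding sums_def by (intro tendsto_intros)
  then show ?thesis by (simp add: sq_norm_tail[OF assms])
qed

lemma amp_square_summable:
  assumes "\<And>n. 0 \<le> p n" "(p has_sum 1) UNIV"
  shows "square_summable (amp p)" "sq_norm (amp p) = 1"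
proof -
  have "(\<lambda>i. (cmod (amp p i))^2) = p" using assms(1) by (auto simp: amp_def fun_eq_iff)
  then show "square_summable (amp p)" "sq_norm (amp p) = 1"
    unfolding square_summable_def sq_norm_def using assms(2) by (auto intro: has_sum_imp_summable infsumI)
qed

lemma outer_amp: "outer (amp p) (amp p) = sqrt_state_proj p"
  by (simp add: outer_def amp_def sqrt_state_proj_def fun_eq_iff)

lemma outer_split_left: "outer x y = (\<lambda>i j. outer (trunc N x) y i j + outer (tail N x) y i j)"
  by (auto simp: outer_def trunc_def tail_def fun_eq_iff)

lemma outer_split_right: "outer x y = (\<lambda>i j. outer x (trunc N y) i j + outer x (tail N y) i j)"
  by (auto simp: outer_def trunc_def tail_def fun_eq_iff)

lemma trunc_Suc: "trunc (Suc N) x = (\<lambda>a. trunc N x a + x N * ket N a)"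
  by (auto simp: trunc_def ket_def fun_eq_iff less_Suc_eq)

lemma hilbert_schmidt_row:
  assumes "square_summable x"
  shows "hilbert_schmidt (\<lambda>k i. if k = 0 then x i else 0)"
proof -
  have "(\<lambda>(k,i). (cmod (if k = 0 then x i else 0))^2) summable_on range (Pair (0::nat))"
    using assms unfolding square_summable_def
    by (subst summable_on_reindex) (auto simp: o_def inj_on_def)
  then show ?thesis
    unfolding hilbert_schmidt_def by (rule summable_on_cong_neutral[THEN iffD1, rotated -1]) auto
qed

lemma trace_class_outer:
  assumes "square_summable x" "square_summable y"
  shows "trace_class (outer x y)"
  unfolding trace_class_def
proof (intro exI conjI allI)
  show "hilbert_schmidt (\<lambda>k i. if k = 0 then cnj (x i) else 0)"
       "hilbert_schmidt (\<lambda>k i. if k = 0 then cnj (y i) else 0)"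
    using assms by (auto intro: hilbert_schmidt_row simp: square_summable_def)
  fix i j
  show "outer x y i j = (\<Sum>\<^sub>\<infinity>k. cnj (if k = 0 then cnj (x i) else 0) * (if k = 0 then cnj (y j) else 0))"
    by (subst infsum_cong[where g = "\<lambda>k. if k = 0 then x i * cnj (y j) else 0"])
       (auto simp: infsum_if_eq outer_def)
qed

lemma trace_class_zero: "trace_class (\<lambda>i j. 0)"
  using trace_class_outer[OF square_summable_trunc square_summable_trunc, of 0 _ 0]
  by (simp add: outer_def trunc_def)

section \<open>Positive block matrices\<close>

lemma block_pos_outer: "block_pos n (\<lambda>a b. outer (z a) (z b))"
  unfolding block_pos_def Let_def
proof (intro allI impI)
  fix S :: "nat set" and v :: "nat \<Rightarrow> nat \<Rightarrow> complex"
  define s where "s = (\<Sum>a<n. \<Sum>i\<in>S. cnj (v a i) * z a i)"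
  have "(\<Sum>a<n. \<Sum>b<n. \<Sum>i\<in>S. \<Sum>j\<in>S. cnj (v a i) * outer (z a) (z b) i j * v b j)
      = (\<Sum>a<n. \<Sum>i\<in>S. cnj (v a i) * z a i) * (\<Sum>b<n. \<Sum>j\<in>S. v b j * cnj (z b j))"
    unfolding outer_def by (simp only: sum_product) (simp add: mult_ac)
  also have "\<dots> = s * cnj s" unfolding s_def by (simp add: cnj_sum)
  also have "\<dots> = complex_of_real ((Re s)^2 + (Im s)^2)" by (rule complex_mult_cnj)
  finally show "Im (\<Sum>a<n. \<Sum>b<n. \<Sum>i\<in>S. \<Sum>j\<in>S. cnj (v a i) * outer (z a) (z b) i j * v b j) = 0 \<and>
    0 \<le> Re (\<Sum>a<n. \<Sum>b<n. \<Sum>i\<in>S. \<Sum>j\<in>S. cnj (v a i) * outer (z a) (z b) i j * v b j)"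
    by simp
qed

lemma sum_cnj_if_eq_mult:
  "finite S \<Longrightarrow> i \<in> S \<Longrightarrow> (\<Sum>x\<in>S. cnj (if x = i then \<alpha> else 0) * f x) = cnj \<alpha> * f i"
  by (simp add: if_distrib[of cnj] if_distrib[of "\<lambda>c. c * _"] cong: if_cong)

lemma sum_mult_if_eq:
  "finite S \<Longrightarrow> i \<in> S \<Longrightarrow> (\<Sum>x\<in>S. f x * (if x = i then \<alpha> else (0::complex))) = f i * \<alpha>"
  by (simp add: if_distrib[of "\<lambda>c. _ * c"] cong: if_cong)

lemma block_pos2_form:
  fixes u :: "nat \<Rightarrow> complex" and \<beta> :: complex
  assumes "block_pos 2 Y" "finite S" "j \<in> S"
  defines "Q \<equiv> (\<Sum>x\<in>S. \<Sum>y\<in>S. cnj (u x) * Y 0 0 x y * u y) + (\<Sum>x\<in>S. cnj (u x) * Y 0 1 x j) * \<beta>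
     + cnj \<beta> * (\<Sum>y\<in>S. Y 1 0 j y * u y) + cnj \<beta> * Y 1 1 j j * \<beta>"
  shows "Im Q = 0 \<and> 0 \<le> Re Q"
proof -
  define v :: "nat \<Rightarrow> nat \<Rightarrow> complex" where "v = (\<lambda>a x. if a = 0 then u x else if x = j then \<beta> else 0)"
  have v0: "v 0 = u" and v1: "v 1 = (\<lambda>x. if x = j then \<beta> else 0)" by (simp_all add: v_def)
  note dl = sum_cnj_if_eq_mult[OF assms(2,3)] and dr = sum_mult_if_eq[OF assms(2,3)]
  have "(\<Sum>a<2::nat. \<Sum>b<2::nat. \<Sum>i\<in>S. \<Sum>j\<in>S. cnj (v a i) * Y a b i j * v b j)
    = (\<Sum>i\<in>S. \<Sum>j'\<in>S. cnj (v 0 i) * Y 0 0 i j' * v 0 j') + (\<Sum>i\<in>S. \<Sum>j'\<in>S. cnj (v 0 i) * Y 0 1 i j' * v 1 j')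
     + (\<Sum>i\<in>S. \<Sum>j'\<in>S. cnj (v 1 i) * Y 1 0 i j' * v 0 j') + (\<Sum>i\<in>S. \<Sum>j'\<in>S. cnj (v 1 i) * Y 1 1 i j' * v 1 j')"
    by (simp add: numeral_2_eq_2 lessThan_Suc)
  also have "\<dots> = Q"
    unfolding v0 v1 Q_def dr
    by (subst (2) sum.swap)
       (simp only: mult.assoc dl flip: sum_distrib_left, simp add: sum_distrib_right mult.assoc)
  finally show ?thesis
    using assms(1)[unfolded block_pos_def, rule_format, OF assms(2), of v] by (simp add: Let_def)
qed

lemma block_pos2_entries:
  fixes \<alpha> \<beta> :: complex and i j :: nat
  assumes "block_pos 2 Y"
  defines "Q \<equiv> cnj \<alpha> * Y 0 0 i i * \<alpha> + cnj \<alpha> * Y 0 1 i j * \<beta> + cnj \<beta> * Y 1 0 j i * \<alpha> + cnj \<beta> * Y 1 1 j j * \<beta>"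
  shows "Im Q = 0 \<and> 0 \<le> Re Q"
proof -
  have S: "finite {i,j}" "i \<in> {i,j}" "j \<in> {i,j}" by auto
  note dl = sum_cnj_if_eq_mult[OF S(1,2)] and dr = sum_mult_if_eq[OF S(1,2)]
  show ?thesis
    using block_pos2_form[OF assms(1) S(1,3), of "\<lambda>x. if x = i then \<alpha> else 0" \<beta>]
    unfolding Q_def dr by (simp only: mult.assoc dl)
qed

lemma nonneg_quadratic_imp_le:
  fixes a B c :: real
  assumes "\<And>t. 0 \<le> a * t^2 * B - 2 * t * B + c" "0 \<le> a" "0 \<le> B"
  shows "B \<le> a * c"
proof (cases "a = 0")
  case True
  show ?thesis
  proof (cases "B = 0")
    case False
    have "0 \<le> a * ((c + 1) / (2 * B))^2 * B - 2 * ((c + 1) / (2 * B)) * B + c" by (rule assms(1))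
    with True False show ?thesis by simp
  qed (use True assms(1)[of 0] in simp)
next
  case False
  then have "0 < a" using assms(2) by simp
  have "0 \<le> a * (1/a)^2 * B - 2 * (1/a) * B + c" by (rule assms(1))
  also have "\<dots> = (a * c - B) / a" using \<open>0 < a\<close> by (simp add: field_simps power2_eq_square)
  finally show ?thesis using \<open>0 < a\<close> by (simp add: zero_le_divide_iff)
qed

context
  fixes Y :: "nat \<Rightarrow> nat \<Rightarrow> mat"
  assumes pos: "block_pos 2 Y"
begin

lemma block_pos2_diag:
  assumes "a \<le> 1"
  shows "Im (Y a a i i) = 0" "0 \<le> Re (Y a a i i)"
  using assms block_pos2_entries[OF pos, where \<alpha>=1 and \<beta>=0 and i=i and j=i]
    block_pos2_entries[OF pos, where \<alpha>=0 and \<beta>=1 and i=i and j=i]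
  by (auto simp: le_Suc_eq)

lemma block_pos2_hermitian: "Y 1 0 j i = cnj (Y 0 1 i j)"
proof -
  have "Im (Y 0 1 i j) + Im (Y 1 0 j i) = 0" "Re (Y 0 1 i j) - Re (Y 1 0 j i) = 0"
    using block_pos2_entries[OF pos, where \<alpha>=1 and \<beta>=1 and i=i and j=j]
      block_pos2_entries[OF pos, where \<alpha>=1 and \<beta>=\<i> and i=i and j=j]
      block_pos2_diag[of 0 i] block_pos2_diag[of 1 j] by simp_all
  then show ?thesis by (simp add: complex_eq_iff)
qed

lemma block_pos2_cauchy_schwarz: "(cmod (Y 0 1 i j))^2 \<le> Re (Y 0 0 i i) * Re (Y 1 1 j j)"
proof -
  define a c b where "a = Re (Y 0 0 i i)" and "c = Re (Y 1 1 j j)" and "b = Y 0 1 i j"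
  have Y00: "Y 0 0 i i = of_real a" and Y11: "Y 1 1 j j = of_real c"
    using block_pos2_diag[of 0 i] block_pos2_diag[of 1 j] by (simp_all add: a_def c_def complex_eq_iff)
  have "0 \<le> a * t^2 * (cmod b)^2 - 2 * t * (cmod b)^2 + c" for t
  proof -
    have "0 \<le> Re (cnj (-(of_real t * b)) * Y 0 0 i i * (-(of_real t * b)) + cnj (-(of_real t * b)) * Y 0 1 i j * 1
        + cnj 1 * Y 1 0 j i * (-(of_real t * b)) + cnj 1 * Y 1 1 j j * 1)"
      using block_pos2_entries[OF pos, where \<alpha>="-(of_real t * b)" and \<beta>=1 and i=i and j=j] by simp
    also have "\<dots> = a * t^2 * (cmod b)^2 - 2 * t * (cmod b)^2 + c"
      unfolding Y00 Y11 block_pos2_hermitian b_def[symmetric] cmod_power2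
      by (simp add: algebra_simps power2_eq_square)
    finally show ?thesis .
  qed
  then have "(cmod b)^2 \<le> a * c"
    by (rule nonneg_quadratic_imp_le) (use block_pos2_diag[of 0 i] in \<open>simp_all add: a_def\<close>)
  then show ?thesis unfolding a_def b_def c_def .
qed

text \<open>The test vector \<open>\<phi>(i0) e\<^sub>i - \<phi>(i) e\<^sub>i\<^sub>0\<close> annihilates the rank-one corner, so
  positivity forces its coupling to the second block to vanish.\<close>
lemma block_pos2_rank_one_corner:
  assumes Y00: "Y 0 0 = (\<lambda>i j. complex_of_real (\<phi> i) * complex_of_real (\<phi> j))"
  shows "complex_of_real (\<phi> i0) * Y 0 1 i j = complex_of_real (\<phi> i) * Y 0 1 i0 j"
proof (cases "i = i0")
  case False
  define S where "S = {i, i0, j}"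
  have S: "finite S" "i \<in> S" "i0 \<in> S" "j \<in> S" unfolding S_def by auto
  define u where "u = (\<lambda>x. (if x = i then complex_of_real (\<phi> i0) else 0) + (if x = i0 then - complex_of_real (\<phi> i) else 0))"
  define D where "D = complex_of_real (\<phi> i0) * Y 0 1 i j - complex_of_real (\<phi> i) * Y 0 1 i0 j"
  have sl: "(\<Sum>x\<in>S. cnj (u x) * f x) = complex_of_real (\<phi> i0) * f i - complex_of_real (\<phi> i) * f i0" for f
    unfolding u_def complex_cnj_add distrib_right sum.distrib sum_cnj_if_eq_mult[OF S(1,2)]
      sum_cnj_if_eq_mult[OF S(1,3)] by simp
  have sr: "(\<Sum>x\<in>S. f x * u x) = f i * complex_of_real (\<phi> i0) - f i0 * complex_of_real (\<phi> i)" for f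
    unfolding u_def distrib_left sum.distrib sum_mult_if_eq[OF S(1,2)] sum_mult_if_eq[OF S(1,3)] by simp
  have form0: "(\<Sum>x\<in>S. \<Sum>y\<in>S. cnj (u x) * Y 0 0 x y * u y) = 0"
    unfolding Y00 by (simp add: mult.assoc sum_distrib_left[symmetric] sr)
  have form1: "(\<Sum>x\<in>S. cnj (u x) * Y 0 1 x j) = D" unfolding sl D_def ..
  have form2: "(\<Sum>y\<in>S. Y 1 0 j y * u y) = cnj D"
    unfolding sr D_def block_pos2_hermitian by (simp add: mult.commute)
  have Y11: "Y 1 1 j j = Re (Y 1 1 j j)" using block_pos2_diag[of 1 j] by (simp add: complex_eq_iff)
  have "(cmod D)^2 \<le> Re (Y 1 1 j j) * 0"
  proof (rule nonneg_quadratic_imp_le)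
    fix t :: real
    have "0 \<le> Re (0 + D * (- (of_real t * cnj D)) + cnj (- (of_real t * cnj D)) * cnj D
        + cnj (- (of_real t * cnj D)) * Y 1 1 j j * (- (of_real t * cnj D)))"
      using block_pos2_form[OF pos S(1,4), of u "- (of_real t * cnj D)"]
      unfolding form0 form1 form2 by simp
    also have "\<dots> = Re (Y 1 1 j j) * t^2 * (cmod D)^2 - 2 * t * (cmod D)^2 + 0"
      unfolding cmod_power2 by (subst Y11) (simp add: algebra_simps power2_eq_square)
    finally show "0 \<le> Re (Y 1 1 j j) * t^2 * (cmod D)^2 - 2 * t * (cmod D)^2 + 0" .
  qed (use block_pos2_diag[of 1 j] in auto)
  then show ?thesis unfolding D_def by simp
qed simp

end

section \<open>Deterministic U(1)-invariant operations\<close>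

lemma sum_if_int_eq:
  "(\<Sum>a<N. if int a = c then g a else 0) = (if 0 \<le> c \<and> nat c < N then g (nat c) else 0)"
proof -
  have "(\<Sum>a<N. if int a = c then g a else 0) = (\<Sum>a<N. if a = nat c \<and> 0 \<le> c then g (nat c) else 0)"
    by (rule sum.cong) auto
  then show ?thesis by (cases "0 \<le> c") (auto simp: sum.delta)
qed

lemma rot_outer_ket:
  "rot \<theta> (outer (ket a) (ket b)) = (\<lambda>i j. cis (\<theta> * real a - \<theta> * real b) * outer (ket a) (ket b) i j)"
  by (auto simp: rot_def outer_def ket_def fun_eq_iff cis_cnj cis_mult)

locale det_u1_op =
  fixes E :: "mat \<Rightarrow> mat"
  assumes deterministic: "deterministic_u1_operation E"
begin

lemma additive: "trace_class X \<Longrightarrow> trace_class Y \<Longrightarrow> E (\<lambda>i j. X i j + Y i j) = (\<lambda>i j. E X i j + E Y i j)"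
  using deterministic unfolding deterministic_u1_operation_def u1_operation_def by blast

lemma homogeneous: "trace_class X \<Longrightarrow> E (\<lambda>i j. c * X i j) = (\<lambda>i j. c * E X i j)"
  using deterministic unfolding deterministic_u1_operation_def u1_operation_def by blast

lemma completely_positive:
  "(\<And>a b. a < n \<Longrightarrow> b < n \<Longrightarrow> trace_class (Y a b)) \<Longrightarrow> block_pos n Y \<Longrightarrow> block_pos n (\<lambda>a b. E (Y a b))"
  using deterministic unfolding deterministic_u1_operation_def u1_operation_def by blast

lemma trace_preserving: "trace_class X \<Longrightarrow> mtrace (E X) = mtrace X"
  using deterministic unfolding deterministic_u1_operation_def by blast

lemma covariant: "trace_class X \<Longrightarrow> E (rot \<phi> X) = rot \<phi> (E X)"
  using deterministic unfolding deterministic_u1_operation_def u1_operation_def by blast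

lemma zero: "E (\<lambda>i j. 0) = (\<lambda>i j. 0)"
  using homogeneous[OF trace_class_zero, of 0] by simp

lemma block_pos_outer_pair:
  assumes "square_summable x" "square_summable y"
  shows "block_pos 2 (\<lambda>a b. E (outer (if a = 0 then x else y) (if b = 0 then x else y)))"
  by (rule completely_positive) (use assms in \<open>auto simp: trace_class_outer block_pos_outer\<close>)

lemma diag_outer:
  assumes "square_summable x"
  shows "Im (E (outer x x) i i) = 0" "0 \<le> Re (E (outer x x) i i)"
  using block_pos2_diag[OF block_pos_outer_pair[OF assms assms], of 0 i] by auto

lemma diag_outer_le_sq_norm:
  assumes x: "square_summable x"
  shows "Re (E (outer x x) i i) \<le> sq_norm x"
proof -
  have "mtrace (outer x x) = (\<Sum>\<^sub>\<infinity>a. complex_of_real ((cmod (x a))^2))"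
    unfolding mtrace_def outer_def by (simp only: complex_norm_square)
  also have "\<dots> = complex_of_real (sq_norm x)"
    using x unfolding sq_norm_def square_summable_def by (intro infsumI has_sum_of_real has_sum_infsum)
  finally have tr: "(\<Sum>\<^sub>\<infinity>a. E (outer x x) a a) = complex_of_real (sq_norm x)"
    using trace_preserving[OF trace_class_outer[OF x x]] unfolding mtrace_def by simp
  show ?thesis
  proof (cases "(\<lambda>a. E (outer x x) a a) summable_on UNIV")
    case True
    have "Re (E (outer x x) i i) = (\<Sum>a\<in>{i}. Re (E (outer x x) a a))" by simp
    also have "\<dots> \<le> (\<Sum>\<^sub>\<infinity>a. Re (E (outer x x) a a))"
      using diag_outer(2)[OF x] by (intro finite_sum_le_infsum summable_on_Re True) auto
    also have "\<dots> = sq_norm x" using infsum_Re[OF True] tr by simp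
    finally show ?thesis .
  next
    case False
    then have "sq_norm x = 0" using tr by (simp add: infsum_not_exists)
    then have "(cmod (x a))^2 = 0" for a
      using x unfolding sq_norm_def square_summable_def by (intro nonneg_infsum_le_0D) auto
    then have "x = (\<lambda>a. 0)" by auto
    then show ?thesis using zero by (simp add: outer_def sq_norm_def)
  qed
qed

lemma outer_entry_bound:
  assumes "square_summable x" "square_summable y"
  shows "cmod (E (outer x y) i j) \<le> sqrt (sq_norm x * sq_norm y)"
proof -
  have "(cmod (E (outer x y) i j))^2 \<le> Re (E (outer x x) i i) * Re (E (outer y y) j j)"
    using block_pos2_cauchy_schwarz[OF block_pos_outer_pair[OF assms], of i j] by simp
  also have "\<dots> \<le> sq_norm x * sq_norm y"
    using assms by (intro mult_mono diag_outer_le_sq_norm diag_outer(2) sq_norm_nonneg)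
  finally show ?thesis by (simp add: real_le_rsqrt)
qed

lemma outer_trunc_left:
  assumes "square_summable z"
  shows "E (outer (trunc N x) z) i j = (\<Sum>a<N. x a * E (outer (ket a) z) i j)"
proof (induction N)
  case 0
  have "outer (trunc 0 x) z = (\<lambda>i j. 0)" by (simp add: outer_def trunc_def fun_eq_iff)
  then show ?case by (simp add: zero)
next
  case (Suc N)
  have "outer (trunc (Suc N) x) z = (\<lambda>i j. outer (trunc N x) z i j + outer (\<lambda>a. x N * ket N a) z i j)"
    by (simp add: trunc_Suc outer_def fun_eq_iff distrib_right)
  then have "E (outer (trunc (Suc N) x) z) i j = E (outer (trunc N x) z) i j + E (outer (\<lambda>a. x N * ket N a) z) i j"
    using assms by (simp add: additive trace_class_outer square_summable_trunc square_summable_scale square_summable_ket)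
  also have "outer (\<lambda>a. x N * ket N a) z = (\<lambda>i j. x N * outer (ket N) z i j)"
    by (simp add: outer_def fun_eq_iff)
  also have "E \<dots> = (\<lambda>i j. x N * E (outer (ket N) z) i j)"
    by (rule homogeneous[OF trace_class_outer[OF square_summable_ket assms]])
  finally show ?case using Suc by simp
qed

lemma outer_trunc_right:
  assumes "square_summable z"
  shows "E (outer z (trunc N y)) i j = (\<Sum>b<N. cnj (y b) * E (outer z (ket b)) i j)"
proof (induction N)
  case 0
  have "outer z (trunc 0 y) = (\<lambda>i j. 0)" by (simp add: outer_def trunc_def fun_eq_iff)
  then show ?case by (simp add: zero)
next
  case (Suc N)
  have "outer z (trunc (Suc N) y) = (\<lambda>i j. outer z (trunc N y) i j + outer z (\<lambda>a. y N * ket N a) i j)"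
    by (simp add: trunc_Suc outer_def fun_eq_iff distrib_left)
  then have "E (outer z (trunc (Suc N) y)) i j = E (outer z (trunc N y)) i j + E (outer z (\<lambda>a. y N * ket N a)) i j"
    using assms by (simp add: additive trace_class_outer square_summable_trunc square_summable_scale square_summable_ket)
  also have "outer z (\<lambda>a. y N * ket N a) = (\<lambda>i j. cnj (y N) * outer z (ket N) i j)"
    by (simp add: outer_def fun_eq_iff)
  also have "E \<dots> = (\<lambda>i j. cnj (y N) * E (outer z (ket N)) i j)"
    by (rule homogeneous[OF trace_class_outer[OF assms square_summable_ket]])
  finally show ?case using Suc by simp
qed

text \<open>If the charge differences disagree by \<open>d \<noteq> 0\<close>, covariance at \<open>\<theta> = \<pi>/d\<close> would
  multiply the entry by \<open>cis \<pi> = -1\<close>.\<close>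
lemma selection_rule:
  assumes "E (outer (ket a) (ket b)) i j \<noteq> 0"
  shows "int i + int b = int j + int a"
proof (rule ccontr)
  assume "int i + int b \<noteq> int j + int a"
  define d where "d = (real a - real b) - (real i - real j)"
  have "d \<noteq> 0" using \<open>int i + int b \<noteq> int j + int a\<close> unfolding d_def by linarith
  define \<theta> where "\<theta> = pi / d"
  have tc: "trace_class (outer (ket a) (ket b))" by (rule trace_class_outer[OF square_summable_ket square_summable_ket])
  have "cis (\<theta> * real a - \<theta> * real b) * E (outer (ket a) (ket b)) i j
     = cis (\<theta> * real i) * E (outer (ket a) (ket b)) i j * cnj (cis (\<theta> * real j))"
    using covariant[OF tc, of \<theta>] unfolding rot_outer_ket homogeneous[OF tc]
    by (simp add: rot_def fun_eq_iff)
  then have "cis (\<theta> * real a - \<theta> * real b) = cis (\<theta> * real i - \<theta> * real j)"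
    using assms by (simp add: cis_cnj cis_mult)
  then have "cis (\<theta> * real a - \<theta> * real b) / cis (\<theta> * real i - \<theta> * real j) = 1" by simp
  then have "cis (\<theta> * d) = 1" unfolding cis_divide d_def by (simp add: algebra_simps)
  moreover have "\<theta> * d = pi" unfolding \<theta>_def using \<open>d \<noteq> 0\<close> by simp
  ultimately show False by simp
qed

lemma outer_ket_right:
  fixes n i j :: nat
  assumes x: "square_summable x"
  defines "c \<equiv> int n + int i - int j"
  shows "E (outer x (ket n)) i j = (if 0 \<le> c then x (nat c) * E (outer (ket (nat c)) (ket n)) i j else 0)"
    (is "_ = ?R")
proof -
  have trunc_eq: "E (outer (trunc N x) (ket n)) i j = ?R" if "N \<ge> n + i + 1" for N
  proof -
    have "E (outer (trunc N x) (ket n)) i j = (\<Sum>a<N. x a * E (outer (ket a) (ket n)) i j)"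
      by (rule outer_trunc_left[OF square_summable_ket])
    also have "\<dots> = (\<Sum>a<N. if int a = c then x a * E (outer (ket a) (ket n)) i j else 0)"
    proof (rule sum.cong[OF refl])
      fix a
      show "x a * E (outer (ket a) (ket n)) i j = (if int a = c then x a * E (outer (ket a) (ket n)) i j else 0)"
        using selection_rule[of a n i j] by (auto simp: c_def)
    qed
    also have "\<dots> = ?R" using that unfolding sum_if_int_eq c_def by auto
    finally show ?thesis .
  qed
  have "cmod (E (outer x (ket n)) i j - ?R) \<le> sqrt (sq_norm (tail N x))" if "N \<ge> n + i + 1" for N
  proof -
    have "E (outer x (ket n)) i j = E (outer (trunc N x) (ket n)) i j + E (outer (tail N x) (ket n)) i j"
      by (subst outer_split_left[of _ _ N])
         (simp add: additive trace_class_outer square_summable_trunc square_summable_tail square_summable_ket x)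
    then show ?thesis
      using trunc_eq[OF that] outer_entry_bound[OF square_summable_tail[OF x] square_summable_ket, of N n i j]
      by (simp add: sq_norm_ket)
  qed
  moreover have "(\<lambda>N. sqrt (sq_norm (tail N x))) \<longlonglongrightarrow> 0"
    using tendsto_real_sqrt[OF sq_norm_tail_tendsto_0[OF x]] by simp
  ultimately have "cmod (E (outer x (ket n)) i j - ?R) \<le> 0"
    by (intro LIMSEQ_le_const) (auto intro: exI[of _ "n + i + 1"])
  then show ?thesis by simp
qed

lemma diag_outer_trunc:
  "E (outer (trunc N x) (trunc N x)) m m = (\<Sum>a<N. complex_of_real ((cmod (x a))^2) * E (outer (ket a) (ket a)) m m)"
proof -
  have "E (outer (trunc N x) (trunc N x)) m m = (\<Sum>a<N. x a * (\<Sum>b<N. cnj (x b) * E (outer (ket a) (ket b)) m m))"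
    by (simp only: outer_trunc_left[OF square_summable_trunc] outer_trunc_right[OF square_summable_ket])
  also have "\<dots> = (\<Sum>a<N. x a * (\<Sum>b<N. if int b = int a then cnj (x b) * E (outer (ket a) (ket b)) m m else 0))"
  proof (intro sum.cong refl arg_cong2[where f = "(*)"])
    fix a b
    show "cnj (x b) * E (outer (ket a) (ket b)) m m = (if int b = int a then cnj (x b) * E (outer (ket a) (ket b)) m m else 0)"
      using selection_rule[of a b m m] by auto
  qed
  also have "\<dots> = (\<Sum>a<N. complex_of_real ((cmod (x a))^2) * E (outer (ket a) (ket a)) m m)"
    unfolding sum_if_int_eq by (intro sum.cong refl) (simp add: mult.assoc flip: complex_norm_square)
  finally show ?thesis .
qed

lemma diag_outer_trunc_tendsto:
  assumes x: "square_summable x"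
  shows "(\<lambda>N. E (outer (trunc N x) (trunc N x)) m m) \<longlonglongrightarrow> E (outer x x) m m"
proof -
  have bound: "cmod (E (outer (trunc N x) (trunc N x)) m m - E (outer x x) m m)
      \<le> 2 * sqrt (sq_norm x * sq_norm (tail N x))" for N
  proof -
    note ss = square_summable_trunc square_summable_tail[OF x] x
    have "E (outer x x) m m = E (outer (trunc N x) x) m m + E (outer (tail N x) x) m m"
      by (subst outer_split_left[of _ _ N]) (simp add: additive trace_class_outer ss)
    moreover have "E (outer (trunc N x) x) m m
        = E (outer (trunc N x) (trunc N x)) m m + E (outer (trunc N x) (tail N x)) m m"
      by (subst outer_split_right[of _ _ N]) (simp add: additive trace_class_outer ss)
    ultimately have "E (outer (trunc N x) (trunc N x)) m m - E (outer x x) m m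
        = - (E (outer (trunc N x) (tail N x)) m m + E (outer (tail N x) x) m m)"
      by simp
    then have "cmod (E (outer (trunc N x) (trunc N x)) m m - E (outer x x) m m)
        = cmod (E (outer (trunc N x) (tail N x)) m m + E (outer (tail N x) x) m m)"
      by (simp only: norm_minus_cancel)
    also have "\<dots> \<le> cmod (E (outer (trunc N x) (tail N x)) m m) + cmod (E (outer (tail N x) x) m m)"
      by (rule norm_triangle_ineq)
    also have "\<dots> \<le> sqrt (sq_norm (trunc N x) * sq_norm (tail N x)) + sqrt (sq_norm (tail N x) * sq_norm x)"
      by (intro add_mono outer_entry_bound ss)
    also have "\<dots> \<le> 2 * sqrt (sq_norm x * sq_norm (tail N x))"
      using mult_right_mono[OF sq_norm_trunc_le[OF x] sq_norm_nonneg[of "tail N x"]]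
      by (simp add: mult.commute[of "sq_norm (tail N x)"])
    finally show ?thesis .
  qed
  have "(\<lambda>N. 2 * sqrt (sq_norm x * sq_norm (tail N x))) \<longlonglongrightarrow> 2 * sqrt (sq_norm x * 0)"
    by (intro tendsto_intros sq_norm_tail_tendsto_0[OF x])
  then have "(\<lambda>N. 2 * sqrt (sq_norm x * sq_norm (tail N x))) \<longlonglongrightarrow> 0" by simp
  then have "(\<lambda>N. E (outer (trunc N x) (trunc N x)) m m - E (outer x x) m m) \<longlonglongrightarrow> 0"
    by (rule Lim_null_comparison[OF always_eventually, rotated]) (use bound in simp)
  then show ?thesis by (rule LIM_zero_cancel)
qed

lemma diag_outer_has_sum:
  assumes x: "square_summable x"
  shows "((\<lambda>a. (cmod (x a))^2 * Re (E (outer (ket a) (ket a)) m m)) has_sum Re (E (outer x x) m m)) UNIV"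
proof -
  have "(\<lambda>N. Re (E (outer (trunc N x) (trunc N x)) m m)) \<longlonglongrightarrow> Re (E (outer x x) m m)"
    by (rule tendsto_Re[OF diag_outer_trunc_tendsto[OF x]])
  then have "(\<lambda>a. (cmod (x a))^2 * Re (E (outer (ket a) (ket a)) m m)) sums Re (E (outer x x) m m)"
    unfolding sums_def diag_outer_trunc Re_sum by simp
  then show ?thesis
    by (rule sums_nonneg_imp_has_sum) (simp add: diag_outer(2)[OF square_summable_ket])
qed

lemma diag_ket_has_sum: "((\<lambda>m. Re (E (outer (ket n) (ket n)) m m)) has_sum 1) UNIV"
proof -
  have tc: "trace_class (outer (ket n) (ket n))"
    by (rule trace_class_outer[OF square_summable_ket square_summable_ket])
  have "mtrace (outer (ket n) (ket n)) = 1"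
    unfolding mtrace_def outer_def ket_def using infsum_if_eq[of n "\<lambda>_. 1::complex"]
    by (simp add: if_distrib cong: if_cong)
  then have tr: "(\<Sum>\<^sub>\<infinity>m. E (outer (ket n) (ket n)) m m) = 1"
    using trace_preserving[OF tc] unfolding mtrace_def by simp
  then have "(\<lambda>m. E (outer (ket n) (ket n)) m m) summable_on UNIV" using infsum_not_exists by force
  with tr have "((\<lambda>m. E (outer (ket n) (ket n)) m m) has_sum 1) UNIV" by (metis has_sum_infsum)
  from has_sum_Re[OF this] show ?thesis by simp
qed

end

section \<open>Necessity of the shift decomposition\<close>

locale u1_conversion = det_u1_op +
  fixes p q :: "nat \<Rightarrow> real"
  assumes p_nonneg: "\<And>n. 0 \<le> p n" and q_nonneg: "\<And>n. 0 \<le> q n"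
    and p_sum: "(p has_sum 1) UNIV" and q_sum: "(q has_sum 1) UNIV"
    and converts: "E (sqrt_state_proj p) = sqrt_state_proj q"
begin

definition transition :: "nat \<Rightarrow> nat \<Rightarrow> real" where
  "transition i n = Re (E (outer (ket n) (ket n)) i i)"

lemma transition_nonneg: "0 \<le> transition i n"
  unfolding transition_def by (rule diag_outer(2)[OF square_summable_ket])

lemma diag_ket_eq_transition: "E (outer (ket n) (ket n)) i i = of_real (transition i n)"
  using diag_outer(1)[OF square_summable_ket, of n i] unfolding transition_def by (simp add: complex_eq_iff)

lemma ket_entry_bound: "(cmod (E (outer (ket a) (ket b)) i j))^2 \<le> transition i a * transition j b"
  using block_pos2_cauchy_schwarz[OF block_pos_outer_pair[OF square_summable_ket[of a] square_summable_ket[of b]],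
      where i = i and j = j]
  unfolding transition_def by simp

lemma square_summable_amp_p: "square_summable (amp p)"
  by (rule amp_square_summable(1)[OF p_nonneg p_sum])

lemma amp_column_proportional:
  "of_real (sqrt (q i0)) * E (outer (amp p) (ket n)) i j = of_real (sqrt (q i)) * E (outer (amp p) (ket n)) i0 j"
proof -
  have "E (outer (amp p) (amp p)) = (\<lambda>i j. of_real (sqrt (q i)) * of_real (sqrt (q j)))"
    unfolding outer_amp converts by (simp add: sqrt_state_proj_def fun_eq_iff)
  then show ?thesis
    using block_pos2_rank_one_corner[OF block_pos_outer_pair[OF square_summable_amp_p square_summable_ket],
        where \<phi> = "\<lambda>i. sqrt (q i)" and i0 = i0 and i = i and j = j]
    by simp
qed

lemma amp_column_diag: "cmod (E (outer (amp p) (ket n)) i i) = sqrt (p n) * transition i n"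
  using outer_ket_right[OF square_summable_amp_p, of n i i]
  by (simp add: amp_def diag_ket_eq_transition norm_mult transition_nonneg p_nonneg)

lemma amp_column_sq:
  "q i0 * p n * (transition i n)^2 = q i * (cmod (E (outer (amp p) (ket n)) i0 i))^2"
proof -
  have "sqrt (q i0) * cmod (E (outer (amp p) (ket n)) i i) = sqrt (q i) * cmod (E (outer (amp p) (ket n)) i0 i)"
    using arg_cong[OF amp_column_proportional[of i0 n i i], of norm] by (simp add: norm_mult q_nonneg)
  then have "(sqrt (q i0) * (sqrt (p n) * transition i n))^2 = (sqrt (q i) * cmod (E (outer (amp p) (ket n)) i0 i))^2"
    by (simp add: amp_column_diag)
  then show ?thesis by (simp add: power_mult_distrib p_nonneg q_nonneg)
qed

lemma amp_column_sq_bound: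
  assumes "0 \<le> int n + int i0 - int i"
  defines "n' \<equiv> nat (int n + int i0 - int i)"
  shows "(cmod (E (outer (amp p) (ket n)) i0 i))^2 \<le> p n' * (transition i0 n' * transition i n)"
  using outer_ket_right[OF square_summable_amp_p, of n i0 i] ket_entry_bound[of n' n i0 i] assms
  by (simp add: n'_def amp_def norm_mult power_mult_distrib p_nonneg mult_left_mono)

text \<open>Apply \<open>amp_column_sq\<close> at \<open>(i0, n, i)\<close> and at \<open>(i, n', i0)\<close>; each bound controls
  one side of the identity.\<close>
lemma detailed_balance:
  assumes "0 \<le> int n + int i0 - int i"
  defines "n' \<equiv> nat (int n + int i0 - int i)"
  shows "q i0 * p n * transition i n = q i * p n' * transition i0 n'"
proof -
  define A B where "A = q i0 * p n * transition i n" and "B = q i * p n' * transition i0 n'"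
  have nonneg: "0 \<le> A" "0 \<le> B"
    unfolding A_def B_def by (simp_all add: p_nonneg q_nonneg transition_nonneg)
  have "A * transition i n \<le> B * transition i n"
    using amp_column_sq[of i0 n i] mult_left_mono[OF amp_column_sq_bound[OF assms(1)] q_nonneg[of i]]
    unfolding A_def B_def n'_def by (simp add: power2_eq_square mult_ac)
  moreover have "B * transition i0 n' \<le> A * transition i0 n'"
  proof -
    have n: "nat (int n' + int i - int i0) = n" and n': "0 \<le> int n' + int i - int i0"
      using assms by (simp_all add: n'_def)
    then show ?thesis
      using amp_column_sq[of i n' i0] mult_left_mono[OF amp_column_sq_bound[OF n'] q_nonneg[of i0]]
      unfolding A_def B_def n by (simp add: power2_eq_square mult_ac)
  qed
  ultimately have "A \<le> B" "B \<le> A"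
    using nonneg transition_nonneg[of i n] transition_nonneg[of i0 n']
    by (auto simp: A_def B_def mult_le_cancel_right)
  then show ?thesis unfolding A_def B_def by simp
qed

lemma balance_vanishes:
  assumes "int n + int i0 - int i < 0"
  shows "q i0 * p n * transition i n = 0"
proof -
  have "E (outer (amp p) (ket n)) i0 i = 0" using outer_ket_right[OF square_summable_amp_p, of n i0 i] assms by simp
  then have "q i0 * p n * (transition i n)^2 = 0" by (simp add: amp_column_sq)
  then show ?thesis by simp
qed

definition ref_level :: nat where
  "ref_level = (LEAST m. 0 < q m)"

lemma q_ref_level_pos: "0 < q ref_level"
proof -
  have "\<exists>m. 0 < q m"
  proof (rule ccontr)
    assume "\<not> (\<exists>m. 0 < q m)"
    then have "q = (\<lambda>_. 0)" using q_nonneg by (auto simp: fun_eq_iff not_less intro: antisym)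
    then show False using has_sum_unique[OF q_sum, of 0] by simp
  qed
  then show ?thesis unfolding ref_level_def by (rule LeastI_ex)
qed

definition weight :: "int \<Rightarrow> real" where
  "weight k = (if 0 \<le> int ref_level + k
     then p (nat (int ref_level + k)) * transition ref_level (nat (int ref_level + k)) / q ref_level else 0)"

lemma weight_nonneg: "0 \<le> weight k"
  unfolding weight_def using p_nonneg transition_nonneg q_ref_level_pos by simp

lemma p_transition_eq: "p n * transition j n = weight (int n - int j) * q j"
proof (cases "0 \<le> int n + int ref_level - int j")
  case True
  have "nat (int ref_level + (int n - int j)) = nat (int n + int ref_level - int j)" by simp
  then show ?thesis
    using detailed_balance[OF True] True q_ref_level_pos unfolding weight_def
    by (simp add: field_simps)
next
  case False
  then show ?thesis
    using balance_vanishes[of n ref_level j] q_ref_level_pos unfolding weight_def by simp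
qed

lemma p_decomposition: "((\<lambda>k. weight k * shift_vec k q m) has_sum p m) UNIV"
proof -
  have "((\<lambda>j. p m * transition j m) has_sum p m * 1) UNIV"
    using has_sum_cmult_right[OF diag_ket_has_sum] by (simp add: transition_def)
  then have "((\<lambda>j. weight (int m - int j) * q j) has_sum p m) UNIV" by (simp add: p_transition_eq)
  also have "?this \<longleftrightarrow> ((\<lambda>k. weight k * shift_vec k q m) has_sum p m) {..int m}"
    by (rule has_sum_reindex_bij_witness[where j = "\<lambda>j. int m - int j" and i = "\<lambda>k. nat (int m - k)"])
       (auto simp: shift_vec_def)
  also have "\<dots> \<longleftrightarrow> ((\<lambda>k. weight k * shift_vec k q m) has_sum p m) UNIV"
    by (rule has_sum_cong_neutral) (auto simp: shift_vec_def)
  finally show ?thesis .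
qed

lemma weight_has_sum: "(weight has_sum 1) UNIV"
proof -
  have "((\<lambda>a. p a * transition ref_level a) has_sum q ref_level) UNIV"
    using diag_outer_has_sum[OF square_summable_amp_p, of ref_level] unfolding outer_amp converts
    by (simp add: sqrt_state_proj_def amp_def transition_def p_nonneg q_nonneg)
  from has_sum_cmult_right[OF this, of "1 / q ref_level"]
  have "((\<lambda>a. p a * transition ref_level a / q ref_level) has_sum 1) UNIV"
    using q_ref_level_pos by simp
  also have "?this \<longleftrightarrow> (weight has_sum 1) {-int ref_level..}"
    by (rule has_sum_reindex_bij_witness[where j = "\<lambda>a. int a - int ref_level" and i = "\<lambda>k. nat (int ref_level + k)"])
       (auto simp: weight_def)
  also have "\<dots> \<longleftrightarrow> (weight has_sum 1) UNIV"
    by (rule has_sum_cong_neutral) (auto simp: weight_def)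
  finally show ?thesis .
qed

lemma weight_le_one: "weight k \<le> 1"
  using finite_sum_le_has_sum[OF weight_has_sum, of "{k}"] weight_nonneg by simp

end

section \<open>Sufficiency: the shift channel\<close>

lemma mtrace_factorization:
  assumes hB: "hilbert_schmidt B" and hC: "hilbert_schmidt C" and X: "\<And>a b. X a b = (\<Sum>\<^sub>\<infinity>l. cnj (B l a) * C l b)"
  shows "mtrace X = (\<Sum>\<^sub>\<infinity>(l,a). cnj (B l a) * C l a)"
proof -
  have sum: "(\<lambda>(l,a). cnj (B l a) * C l a) summable_on UNIV \<times> UNIV"
    using summable_on_cnj_mult[of "\<lambda>(l,a). B l a" UNIV "\<lambda>(l,a). C l a"] hB hC
    unfolding hilbert_schmidt_def by (simp add: case_prod_unfold)
  have "mtrace X = (\<Sum>\<^sub>\<infinity>a. \<Sum>\<^sub>\<infinity>l. cnj (B l a) * C l a)" unfolding mtrace_def X ..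
  also have "\<dots> = (\<Sum>\<^sub>\<infinity>l. \<Sum>\<^sub>\<infinity>a. cnj (B l a) * C l a)"
    using sum by (intro infsum_swap_banach[symmetric]) simp
  also have "\<dots> = (\<Sum>\<^sub>\<infinity>(l,a). cnj (B l a) * C l a)"
    using sum by (subst infsum_Sigma'_banach) simp_all
  finally show ?thesis .
qed

definition shift_idx :: "nat \<Rightarrow> int \<Rightarrow> nat" where
  "shift_idx i k = nat (int i + k)"

locale shift_mixture =
  fixes p q :: "nat \<Rightarrow> real" and w :: "int \<Rightarrow> real"
  assumes p_nonneg: "\<And>n. 0 \<le> p n" and q_nonneg: "\<And>n. 0 \<le> q n"
    and p_sum: "(p has_sum 1) UNIV" and q_sum: "(q has_sum 1) UNIV"
    and w_nonneg: "\<And>k. 0 \<le> w k" and w_sum: "(w has_sum 1) UNIV"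
    and p_mixture: "\<And>m. ((\<lambda>k. w k * shift_vec k q m) has_sum p m) UNIV"
begin

lemma shift_vec_nonneg: "0 \<le> shift_vec k q n"
  using q_nonneg by (simp add: shift_vec_def)

lemma mixture_double_sum: "((\<lambda>(k,m). w k * q m) has_sum 1) {(k,m). 0 \<le> int m + k}"
proof -
  define f where "f = (\<lambda>(n::nat, k::int). w k * shift_vec k q n)"
  have "f summable_on UNIV \<times> UNIV"
    unfolding f_def by (rule summable_on_SigmaI[where g = p])
      (use p_mixture p_sum w_nonneg shift_vec_nonneg in \<open>auto intro: has_sum_imp_summable\<close>)
  then have "(f has_sum 1) (UNIV \<times> UNIV)"
    by (intro has_sum_SigmaI[OF _ p_sum]) (use p_mixture in \<open>simp_all add: f_def\<close>)
  also have "?this \<longleftrightarrow> (f has_sum 1) {(n, k). 0 \<le> int n - k}"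
    by (rule has_sum_cong_neutral) (auto simp: f_def shift_vec_def)
  also have "\<dots> \<longleftrightarrow> ((\<lambda>(k,m). w k * q m) has_sum 1) {(k,m). 0 \<le> int m + k}"
    by (rule has_sum_reindex_bij_witness[where j = "\<lambda>(n,k). (k, nat (int n - k))" and i = "\<lambda>(k,m). (nat (int m + k), k)"])
       (auto simp: f_def shift_vec_def)
  finally show ?thesis .
qed

lemma product_double_sum: "((\<lambda>(k,m). w k * q m) has_sum 1) UNIV"
proof -
  have qk: "((\<lambda>m. w k * q m) has_sum w k) UNIV" for k
    using has_sum_cmult_right[OF q_sum, of "w k"] by simp
  have "(\<lambda>(k, m). w k * q m) summable_on UNIV \<times> UNIV"
    by (rule summable_on_SigmaI[where g = w]) (use qk w_sum w_nonneg q_nonneg in \<open>auto intro: has_sum_imp_summable\<close>)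
  then have "((\<lambda>(k, m). w k * q m) has_sum 1) (UNIV \<times> UNIV)"
    by (intro has_sum_SigmaI[OF _ w_sum]) (use qk in simp_all)
  then show ?thesis by simp
qed

lemma w_mult_q_vanishes:
  assumes "int m + k < 0"
  shows "w k * q m = 0"
proof -
  define S where "S = {(k,m). 0 \<le> int m + k}"
  have "(\<lambda>(k,m). w k * q m) summable_on - S"
    using product_double_sum by (rule summable_on_subset_banach[OF has_sum_imp_summable]) simp
  then obtain s where s: "((\<lambda>(k,m). w k * q m) has_sum s) (- S)" by (auto simp: summable_on_def)
  have "((\<lambda>(k,m). w k * q m) has_sum (1 + s)) (S \<union> - S)"
    using has_sum_Un_disjoint[OF mixture_double_sum[folded S_def] s] by simp
  then have "s = 0" using has_sum_unique[OF _ product_double_sum] by fastforce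
  have "(\<lambda>(k,m). w k * q m) (k, m) = 0"
    by (rule nonneg_has_sum_le_0D[OF s]) (use \<open>s = 0\<close> assms w_nonneg q_nonneg in \<open>auto simp: S_def\<close>)
  then show ?thesis by simp
qed

text \<open>\<open>K\<^sub>k = \<Sum>\<^sub>n kraus_coeff k n |n - k\<rangle>\<langle>n|\<close>. On levels with \<open>p(n) = 0\<close> any isometric
  choice works; there \<open>K\<^sub>0\<close> acts as the identity.\<close>
definition kraus_coeff :: "int \<Rightarrow> nat \<Rightarrow> real" where
  "kraus_coeff k n = (if 0 < p n then sqrt (w k * shift_vec k q n / p n) else if k = 0 then 1 else 0)"

text \<open>\<open>kraus k i = \<langle>i|K\<^sub>k|i + k\<rangle>\<close>.\<close>
definition kraus :: "int \<Rightarrow> nat \<Rightarrow> real" where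
  "kraus k i = (if 0 \<le> int i + k then kraus_coeff k (shift_idx i k) else 0)"

definition channel :: "mat \<Rightarrow> mat" where
  "channel X = (\<lambda>i j. \<Sum>\<^sub>\<infinity>k. complex_of_real (kraus k i * kraus k j) * X (shift_idx i k) (shift_idx j k))"

lemma kraus_coeff_nonneg: "0 \<le> kraus_coeff k n"
  unfolding kraus_coeff_def using w_nonneg[of k] shift_vec_nonneg[of k n] by auto

lemma kraus_coeff_sq_has_sum: "((\<lambda>k. (kraus_coeff k n)^2) has_sum 1) UNIV"
proof (cases "0 < p n")
  case True
  have "(kraus_coeff k n)^2 = (1 / p n) * (w k * shift_vec k q n)" for k
    unfolding kraus_coeff_def using True w_nonneg[of k] shift_vec_nonneg[of k n] by simp
  then show ?thesis using has_sum_cmult_right[OF p_mixture[of n], of "1 / p n"] True by simp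
next
  case False
  show ?thesis by (rule has_sum_finite_neutralI[of "{0}"]) (auto simp: kraus_coeff_def False)
qed

lemma kraus_coeff_completeness:
  "(\<Sum>\<^sub>\<infinity>k. cnj (of_real (kraus_coeff k n) * b) * (of_real (kraus_coeff k n) * c)) = cnj b * c"
proof -
  have "((\<lambda>k. of_real ((kraus_coeff k n)^2)) has_sum (1::complex)) UNIV"
    using has_sum_of_real[OF kraus_coeff_sq_has_sum[of n]] by simp
  from has_sum_cmult_left[OF this, of "cnj b * c"] show ?thesis
    by (simp add: infsumI power2_eq_square mult_ac)
qed

lemma kraus_coeff_vanishes: "int n < k \<Longrightarrow> kraus_coeff k n = 0"
  unfolding kraus_coeff_def shift_vec_def by auto

lemma kraus_coeff_mult_sqrt: "kraus_coeff k n * sqrt (p n) = sqrt (w k) * sqrt (shift_vec k q n)"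
proof (cases "0 < p n")
  case True
  then show ?thesis by (simp add: kraus_coeff_def real_sqrt_mult real_sqrt_divide)
next
  case False
  then have "p n = 0" using p_nonneg[of n] by simp
  then have "w k * shift_vec k q n = 0"
    by (intro nonneg_has_sum_le_0D[OF p_mixture[of n]]) (auto intro: mult_nonneg_nonneg w_nonneg shift_vec_nonneg)
  then show ?thesis using \<open>p n = 0\<close> by (simp flip: real_sqrt_mult)
qed

lemma kraus_coeff_weighted_summable:
  assumes "hilbert_schmidt B"
  shows "(\<lambda>((l,a),k). (cmod (of_real (kraus_coeff k a) * B l a))^2) summable_on UNIV"
proof -
  define f where "f = (\<lambda>((l::nat,a::nat),k::int). (cmod (of_real (kraus_coeff k a) * B l a))^2)"
  have "f summable_on Sigma UNIV (\<lambda>_. UNIV)"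
  proof (rule summable_on_SigmaI[where g = "\<lambda>(l,a). (cmod (B l a))^2"])
    fix la :: "nat \<times> nat"
    show "((\<lambda>k. f (la, k)) has_sum (case la of (l,a) \<Rightarrow> (cmod (B l a))^2)) UNIV"
      using has_sum_cmult_left[OF kraus_coeff_sq_has_sum[of "snd la"], of "(cmod (B (fst la) (snd la)))^2"]
      by (cases la) (simp add: f_def norm_mult power_mult_distrib abs_of_nonneg kraus_coeff_nonneg)
  qed (use assms in \<open>auto simp: hilbert_schmidt_def f_def\<close>)
  then show ?thesis by (simp add: f_def)
qed

lemma kraus_weighted_summable:
  assumes "hilbert_schmidt B"
  shows "(\<lambda>(i,k,l). (cmod (of_real (kraus k i) * B l (shift_idx i k)))^2) summable_on UNIV"
proof -
  define g where "g = (\<lambda>((l,a),k). (cmod (of_real (kraus_coeff k a) * B l a))^2)"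
  define h where "h = (\<lambda>(i::nat,(k::int,l::nat)). ((l, shift_idx i k), k))"
  define A where "A = {(i::nat,(k::int,l::nat)). 0 \<le> int i + k}"
  have inj: "inj_on h A" unfolding inj_on_def h_def A_def shift_idx_def by auto
  have "g summable_on h ` A"
    using kraus_coeff_weighted_summable[OF assms] unfolding g_def by (rule summable_on_subset_banach) simp
  then have "(g \<circ> h) summable_on A" by (subst summable_on_reindex[OF inj, symmetric])
  then show ?thesis
    by (rule summable_on_cong_neutral[THEN iffD1, rotated -1]) (auto simp: A_def g_def h_def kraus_def)
qed

lemma channel_entry:
  assumes hB: "hilbert_schmidt B" and hC: "hilbert_schmidt C" and X: "\<And>a b. X a b = (\<Sum>\<^sub>\<infinity>l. cnj (B l a) * C l b)"
  defines "H \<equiv> \<lambda>i j (k,l). cnj (of_real (kraus k i) * B l (shift_idx i k)) * (of_real (kraus k j) * C l (shift_idx j k))"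
  shows "H i j summable_on UNIV"
    "(\<lambda>k. complex_of_real (kraus k i * kraus k j) * X (shift_idx i k) (shift_idx j k)) summable_on UNIV"
    "channel X i j = infsum (H i j) UNIV"
proof -
  have slice: "(\<lambda>(k,l). (cmod (of_real (kraus k i) * D l (shift_idx i k)))^2) summable_on UNIV"
    if "hilbert_schmidt D" for D i
  proof -
    have "(\<lambda>(i,kl). case kl of (k,l) \<Rightarrow> (cmod (of_real (kraus k i) * D l (shift_idx i k)))^2)
        summable_on Sigma UNIV (\<lambda>_. UNIV)"
      using kraus_weighted_summable[OF that] by (simp add: case_prod_unfold)
    from summable_on_SigmaD1[OF this, of i] show ?thesis by (simp add: case_prod_unfold)
  qed
  show Hs: "H i j summable_on UNIV"
    unfolding H_def case_prod_unfold by (intro summable_on_cnj_mult slice[unfolded case_prod_unfold] hB hC)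
  have inner: "(\<Sum>\<^sub>\<infinity>l. H i j (k,l)) = complex_of_real (kraus k i * kraus k j) * X (shift_idx i k) (shift_idx j k)" for k
    unfolding H_def X by (simp add: infsum_cmult_left' flip: infsum_cmult_right') (simp add: mult_ac)
  show "(\<lambda>k. complex_of_real (kraus k i * kraus k j) * X (shift_idx i k) (shift_idx j k)) summable_on UNIV"
    using summable_on_Sigma_banach[of "\<lambda>k l. H i j (k,l)" UNIV "\<lambda>_. UNIV"] Hs unfolding inner by simp
  show "channel X i j = infsum (H i j) UNIV"
    using infsum_Sigma'_banach[of "\<lambda>k l. H i j (k,l)" UNIV "\<lambda>_. UNIV"] Hs unfolding inner channel_def by simp
qed

text \<open>A Hilbert-Schmidt factor of \<open>channel X\<close>: the rows of \<open>K\<^sub>k B\<close> for all \<open>k\<close>, with the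
  pairs \<open>(k, l)\<close> enumerated by \<open>to_nat\<close>.\<close>
definition kraus_factor :: "mat \<Rightarrow> mat" where
  "kraus_factor B = (\<lambda>r i. if r \<in> range (to_nat :: int \<times> nat \<Rightarrow> nat)
     then (case from_nat r :: int \<times> nat of (k,l) \<Rightarrow> of_real (kraus k i) * B l (shift_idx i k)) else 0)"

lemma hilbert_schmidt_kraus_factor:
  assumes "hilbert_schmidt B"
  shows "hilbert_schmidt (kraus_factor B)"
proof -
  define \<phi> where "\<phi> = (\<lambda>(kl :: int \<times> nat, i::nat). (to_nat kl, i))"
  have inj: "inj \<phi>" unfolding \<phi>_def inj_on_def by auto
  have "(\<lambda>((k,l),i). (cmod (of_real (kraus k i) * B l (shift_idx i k)))^2) summable_on UNIV \<times> UNIV"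
    using kraus_weighted_summable[OF assms] by (subst summable_on_swap) (simp add: case_prod_unfold)
  moreover have "(\<lambda>(r,i). (cmod (kraus_factor B r i))^2) \<circ> \<phi>
      = (\<lambda>((k,l),i). (cmod (of_real (kraus k i) * B l (shift_idx i k)))^2)"
    by (auto simp: fun_eq_iff \<phi>_def kraus_factor_def)
  ultimately have "(\<lambda>(r,i). (cmod (kraus_factor B r i))^2) summable_on range \<phi>"
    by (subst summable_on_reindex[OF inj]) simp
  then show ?thesis
    unfolding hilbert_schmidt_def
    by (rule summable_on_cong_neutral[THEN iffD1, rotated -1]) (auto simp: kraus_factor_def \<phi>_def image_iff)
qed

lemma trace_class_channel:
  assumes "trace_class X"
  shows "trace_class (channel X)"
proof -
  obtain B C where hB: "hilbert_schmidt B" and hC: "hilbert_schmidt C"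
    and X: "\<And>a b. X a b = (\<Sum>\<^sub>\<infinity>l. cnj (B l a) * C l b)"
    using assms unfolding trace_class_def by blast
  show ?thesis
    unfolding trace_class_def
  proof (intro exI conjI allI)
    show "hilbert_schmidt (kraus_factor B)" "hilbert_schmidt (kraus_factor C)"
      using hilbert_schmidt_kraus_factor hB hC by auto
    fix i j
    have "(\<Sum>\<^sub>\<infinity>r. cnj (kraus_factor B r i) * kraus_factor C r j)
        = (\<Sum>\<^sub>\<infinity>r\<in>range (to_nat :: int \<times> nat \<Rightarrow> nat). cnj (kraus_factor B r i) * kraus_factor C r j)"
      by (rule infsum_cong_neutral) (auto simp: kraus_factor_def)
    also have "\<dots> = (\<Sum>\<^sub>\<infinity>kl::int \<times> nat. cnj (kraus_factor B (to_nat kl) i) * kraus_factor C (to_nat kl) j)"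
      by (subst infsum_reindex) (auto simp: o_def)
    also have "\<dots> = channel X i j"
      unfolding channel_entry(3)[OF hB hC X] by (rule infsum_cong) (auto simp: kraus_factor_def)
    finally show "channel X i j = (\<Sum>\<^sub>\<infinity>r. cnj (kraus_factor B r i) * kraus_factor C r j)" by simp
  qed
qed

lemma channel_trace:
  assumes "trace_class X"
  shows "mtrace (channel X) = mtrace X"
proof -
  obtain B C where hB: "hilbert_schmidt B" and hC: "hilbert_schmidt C"
    and X: "\<And>a b. X a b = (\<Sum>\<^sub>\<infinity>l. cnj (B l a) * C l b)"
    using assms unfolding trace_class_def by blast
  define \<Phi> where "\<Phi> = (\<lambda>(i::nat,(k::int,l::nat)).
    cnj (of_real (kraus k i) * B l (shift_idx i k)) * (of_real (kraus k i) * C l (shift_idx i k)))"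
  define \<Psi> where "\<Psi> = (\<lambda>((l::nat,a::nat),k::int).
    cnj (of_real (kraus_coeff k a) * B l a) * (of_real (kraus_coeff k a) * C l a))"
  have \<Phi>: "\<Phi> summable_on UNIV \<times> UNIV"
    using summable_on_cnj_mult[of "\<lambda>(i,k,l). of_real (kraus k i) * B l (shift_idx i k)" UNIV
        "\<lambda>(i,k,l). of_real (kraus k i) * C l (shift_idx i k)"]
      kraus_weighted_summable[OF hB] kraus_weighted_summable[OF hC]
    by (simp add: \<Phi>_def case_prod_unfold)
  have \<Psi>: "\<Psi> summable_on UNIV \<times> UNIV"
    using summable_on_cnj_mult[of "\<lambda>((l,a),k). of_real (kraus_coeff k a) * B l a" UNIV
        "\<lambda>((l,a),k). of_real (kraus_coeff k a) * C l a"]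
      kraus_coeff_weighted_summable[OF hB] kraus_coeff_weighted_summable[OF hC]
    by (simp add: \<Psi>_def case_prod_unfold)
  have "mtrace (channel X) = (\<Sum>\<^sub>\<infinity>i. \<Sum>\<^sub>\<infinity>kl. \<Phi> (i, kl))"
    unfolding mtrace_def channel_entry(3)[OF hB hC X] \<Phi>_def by (simp add: case_prod_unfold)
  also have "\<dots> = infsum \<Phi> UNIV"
    using infsum_Sigma'_banach[of "\<lambda>i kl. \<Phi> (i, kl)" UNIV "\<lambda>_. UNIV"] \<Phi> by simp
  also have "\<dots> = infsum \<Phi> {(i,k,l). 0 \<le> int i + k}"
    by (rule infsum_cong_neutral) (auto simp: \<Phi>_def kraus_def)
  also have "\<dots> = infsum \<Psi> {((l,a),k). k \<le> int a}"
    by (rule infsum_reindex_bij_witness[where j = "\<lambda>(i,k,l). ((l, shift_idx i k), k)"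
          and i = "\<lambda>((l,a),k). (nat (int a - k), k, l)"])
       (auto simp: \<Phi>_def \<Psi>_def kraus_def shift_idx_def)
  also have "\<dots> = infsum \<Psi> UNIV"
    by (rule infsum_cong_neutral) (auto simp: \<Psi>_def kraus_coeff_vanishes)
  also have "\<dots> = (\<Sum>\<^sub>\<infinity>la. \<Sum>\<^sub>\<infinity>k. \<Psi> (la, k))"
    using infsum_Sigma'_banach[of "\<lambda>la k. \<Psi> (la, k)" UNIV "\<lambda>_. UNIV"] \<Psi> by simp
  also have "\<dots> = (\<Sum>\<^sub>\<infinity>(l,a). cnj (B l a) * C l a)"
    by (rule infsum_cong, clarify) (simp only: \<Psi>_def prod.case kraus_coeff_completeness)
  also have "\<dots> = mtrace X" by (rule mtrace_factorization[OF hB hC X, symmetric])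
  finally show ?thesis .
qed

lemma channel_summable:
  assumes "trace_class X"
  shows "(\<lambda>k. complex_of_real (kraus k i * kraus k j) * X (shift_idx i k) (shift_idx j k)) summable_on UNIV"
  using assms channel_entry(2) unfolding trace_class_def by blast

text \<open>The \<open>k\<close>-th term of the quadratic form of \<open>channel Y\<close> is the quadratic form of \<open>Y\<close>
  at the test vector \<open>K\<^sub>k\<^sup>\<dagger> v\<close>.\<close>
lemma kraus_term_form:
  fixes S :: "nat set" and k :: int and v :: "nat \<Rightarrow> nat \<Rightarrow> complex" and M :: mat
  assumes fin: "finite S"
  defines "S' \<equiv> (\<lambda>x. shift_idx x k) ` {x\<in>S. 0 \<le> int x + k}"
  defines "v' \<equiv> (\<lambda>a u. if 0 \<le> int u - k \<and> nat (int u - k) \<in> S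
     then complex_of_real (kraus k (nat (int u - k))) * v a (nat (int u - k)) else 0)"
  shows "(\<Sum>x\<in>S. \<Sum>y\<in>S. cnj (v a x) * (complex_of_real (kraus k x * kraus k y) * M (shift_idx x k) (shift_idx y k)) * v b y)
    = (\<Sum>u\<in>S'. \<Sum>u'\<in>S'. cnj (v' a u) * M u u' * v' b u')"
proof -
  define T where "T = {x\<in>S. 0 \<le> int x + k}"
  have finT: "finite T" using fin unfolding T_def by simp
  have inj: "inj_on (\<lambda>x. shift_idx x k) T" unfolding inj_on_def T_def shift_idx_def by auto
  have v'_shift: "v' c (shift_idx x k) = complex_of_real (kraus k x) * v c x" if "x \<in> T" for c x
    using that unfolding v'_def T_def shift_idx_def by auto
  have "(\<Sum>x\<in>S. \<Sum>y\<in>S. cnj (v a x) * (complex_of_real (kraus k x * kraus k y) * M (shift_idx x k) (shift_idx y k)) * v b y)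
      = (\<Sum>x\<in>T. \<Sum>y\<in>T. cnj (v a x) * (complex_of_real (kraus k x * kraus k y) * M (shift_idx x k) (shift_idx y k)) * v b y)"
    by (subst (1 2) sum.mono_neutral_right[OF fin, of T]) (auto simp: T_def kraus_def)
  also have "\<dots> = (\<Sum>x\<in>T. \<Sum>y\<in>T. cnj (v' a (shift_idx x k)) * M (shift_idx x k) (shift_idx y k) * v' b (shift_idx y k))"
    by (intro sum.cong refl) (simp add: v'_shift mult_ac)
  also have "\<dots> = (\<Sum>u\<in>S'. \<Sum>u'\<in>S'. cnj (v' a u) * M u u' * v' b u')"
    unfolding S'_def T_def[symmetric] by (simp only: sum.reindex[OF inj] o_def)
  finally show ?thesis .
qed

lemma channel_block_pos:
  assumes tc: "\<And>a b. a < n \<Longrightarrow> b < n \<Longrightarrow> trace_class (Y a b)" and pos: "block_pos n Y"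
  shows "block_pos n (\<lambda>a b. channel (Y a b))"
  unfolding block_pos_def Let_def
proof (intro allI impI)
  fix S :: "nat set" and v :: "nat \<Rightarrow> nat \<Rightarrow> complex"
  assume fin: "finite S"
  define t where "t = (\<lambda>a b x y k. complex_of_real (kraus k x * kraus k y) * Y a b (shift_idx x k) (shift_idx y k))"
  define Z where "Z = (\<lambda>k. \<Sum>a<n. \<Sum>b<n. \<Sum>x\<in>S. \<Sum>y\<in>S. cnj (v a x) * t a b x y k * v b y)"
  let ?z = "\<Sum>a<n. \<Sum>b<n. \<Sum>i\<in>S. \<Sum>j\<in>S. cnj (v a i) * channel (Y a b) i j * v b j"
  have hz: "(Z has_sum ?z) UNIV" unfolding Z_def
  proof (intro has_sum_sum fin finite_lessThan)
    fix a b x y assume ab: "a \<in> {..<n}" "b \<in> {..<n}"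
    have "(t a b x y has_sum channel (Y a b) x y) UNIV"
      unfolding t_def channel_def using channel_summable[OF tc, of a b x y] ab by (simp add: has_sum_infsum)
    from has_sum_cmult_left[OF has_sum_cmult_right[OF this, of "cnj (v a x)"], of "v b y"]
    show "((\<lambda>k. cnj (v a x) * t a b x y k * v b y) has_sum cnj (v a x) * channel (Y a b) x y * v b y) UNIV" .
  qed
  have Zk: "Im (Z k) = 0 \<and> 0 \<le> Re (Z k)" for k
  proof -
    define S' where "S' = (\<lambda>x. shift_idx x k) ` {x\<in>S. 0 \<le> int x + k}"
    define v' where "v' = (\<lambda>a u. if 0 \<le> int u - k \<and> nat (int u - k) \<in> S
       then complex_of_real (kraus k (nat (int u - k))) * v a (nat (int u - k)) else 0)"
    have "Z k = (\<Sum>a<n. \<Sum>b<n. \<Sum>u\<in>S'. \<Sum>u'\<in>S'. cnj (v' a u) * Y a b u u' * v' b u')"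
      unfolding Z_def t_def S'_def v'_def by (intro sum.cong refl kraus_term_form fin)
    moreover have "finite S'" using fin unfolding S'_def by simp
    ultimately show ?thesis using pos[unfolded block_pos_def Let_def, rule_format, of S' v'] by simp
  qed
  have "((\<lambda>k. Im (Z k)) has_sum 0) UNIV" by (rule has_sum_0) (use Zk in auto)
  then have "Im ?z = 0" using has_sum_unique[OF has_sum_Im[OF hz]] by blast
  moreover have "0 \<le> Re ?z" by (rule has_sum_nonneg[OF has_sum_Re[OF hz]]) (use Zk in auto)
  ultimately show "Im ?z = 0 \<and> 0 \<le> Re ?z" by blast
qed

lemma channel_additive:
  assumes "trace_class X" "trace_class Y"
  shows "channel (\<lambda>i j. X i j + Y i j) = (\<lambda>i j. channel X i j + channel Y i j)"
  unfolding channel_def distrib_left by (intro ext infsum_add channel_summable assms)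

lemma channel_homogeneous: "channel (\<lambda>i j. c * X i j) = (\<lambda>i j. c * channel X i j)"
  unfolding channel_def by (simp add: mult.left_commute[of _ c] infsum_cmult_right')

lemma channel_covariant: "channel (rot \<phi> X) = rot \<phi> (channel X)"
proof (intro ext)
  fix i j
  have summand: "complex_of_real (kraus k i * kraus k j) * rot \<phi> X (shift_idx i k) (shift_idx j k)
     = cis (\<phi> * real i) * (complex_of_real (kraus k i * kraus k j) * X (shift_idx i k) (shift_idx j k)) * cnj (cis (\<phi> * real j))"
    for k
  proof (cases "0 \<le> int i + k \<and> 0 \<le> int j + k")
    case True
    then have "real (shift_idx i k) = real i + of_int k" "real (shift_idx j k) = real j + of_int k"
      unfolding shift_idx_def by auto
    then have "cis (\<phi> * real (shift_idx i k)) * cnj (cis (\<phi> * real (shift_idx j k)))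
        = cis (\<phi> * real i) * cnj (cis (\<phi> * real j))"
      by (simp add: cis_cnj cis_mult algebra_simps)
    then show ?thesis unfolding rot_def by (metis (no_types, lifting) mult.assoc mult.left_commute)
  qed (auto simp: kraus_def)
  have "channel (rot \<phi> X) i j = (\<Sum>\<^sub>\<infinity>k. cis (\<phi> * real i)
      * (complex_of_real (kraus k i * kraus k j) * X (shift_idx i k) (shift_idx j k)) * cnj (cis (\<phi> * real j)))"
    unfolding channel_def summand ..
  also have "\<dots> = rot \<phi> (channel X) i j"
    unfolding channel_def rot_def by (simp add: infsum_cmult_left' infsum_cmult_right')
  finally show "channel (rot \<phi> X) i j = rot \<phi> (channel X) i j" .
qed

lemma channel_state: "channel (sqrt_state_proj p) = sqrt_state_proj q"
proof (intro ext)
  fix i j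
  have summand: "complex_of_real (kraus k i * kraus k j) * sqrt_state_proj p (shift_idx i k) (shift_idx j k)
     = complex_of_real (w k * (sqrt (q i) * sqrt (q j)))" for k
  proof (cases "0 \<le> int i + k \<and> 0 \<le> int j + k")
    case True
    have factor: "kraus k x * sqrt (p (shift_idx x k)) = sqrt (w k) * sqrt (q x)" if "0 \<le> int x + k" for x
      using that kraus_coeff_mult_sqrt[of k "shift_idx x k"] unfolding kraus_def shift_vec_def shift_idx_def by simp
    have "kraus k i * kraus k j * (sqrt (p (shift_idx i k)) * sqrt (p (shift_idx j k)))
        = (kraus k i * sqrt (p (shift_idx i k))) * (kraus k j * sqrt (p (shift_idx j k)))"
      by (simp add: mult_ac)
    also have "\<dots> = (sqrt (w k) * sqrt (q i)) * (sqrt (w k) * sqrt (q j))"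
      using True by (simp only: factor)
    also have "\<dots> = w k * (sqrt (q i) * sqrt (q j))"
      using w_nonneg[of k] by (simp add: mult_ac abs_of_nonneg)
    finally show ?thesis unfolding sqrt_state_proj_def by (simp flip: of_real_mult)
  next
    case False
    then have "w k * q i = 0 \<or> w k * q j = 0" using w_mult_q_vanishes[of i k] w_mult_q_vanishes[of j k] by auto
    then show ?thesis using False by (auto simp: kraus_def)
  qed
  have "((\<lambda>k. complex_of_real (w k * (sqrt (q i) * sqrt (q j)))) has_sum complex_of_real (1 * (sqrt (q i) * sqrt (q j)))) UNIV"
    by (intro has_sum_of_real has_sum_cmult_left w_sum)
  then show "channel (sqrt_state_proj p) i j = sqrt_state_proj q i j"
    unfolding channel_def summand by (simp add: infsumI sqrt_state_proj_def)
qed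

lemma deterministic_channel: "deterministic_u1_operation channel"
  unfolding deterministic_u1_operation_def u1_operation_def
  by (auto simp: trace_class_channel channel_additive channel_homogeneous channel_block_pos
      channel_trace channel_covariant)

end

theorem theorem3:
  fixes p q :: "nat \<Rightarrow> real"
  assumes "\<And>n. 0 \<le> p n" and "\<And>n. 0 \<le> q n"
    and "(p has_sum 1) UNIV" and "(q has_sum 1) UNIV"
  shows "(\<exists>E. deterministic_u1_operation E \<and> E (sqrt_state_proj p) = sqrt_state_proj q)
     \<longleftrightarrow> (\<exists>w :: int \<Rightarrow> real. (\<forall>k. 0 \<le> w k \<and> w k \<le> 1) \<and> (w has_sum 1) UNIV \<and>
           (\<forall>m. ((\<lambda>k. w k * shift_vec k q m) has_sum p m) UNIV))"
proof
  assume "\<exists>E. deterministic_u1_operation E \<and> E (sqrt_state_proj p) = sqrt_state_proj q"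
  then obtain E where "deterministic_u1_operation E" "E (sqrt_state_proj p) = sqrt_state_proj q" by blast
  then interpret u1_conversion E p q using assms by unfold_locales
  show "\<exists>w. (\<forall>k. 0 \<le> w k \<and> w k \<le> 1) \<and> (w has_sum 1) UNIV \<and> (\<forall>m. ((\<lambda>k. w k * shift_vec k q m) has_sum p m) UNIV)"
    using weight_nonneg weight_le_one weight_has_sum p_decomposition by blast
next
  assume "\<exists>w. (\<forall>k. 0 \<le> w k \<and> w k \<le> 1) \<and> (w has_sum 1) UNIV \<and> (\<forall>m. ((\<lambda>k. w k * shift_vec k q m) has_sum p m) UNIV)"
  then obtain w where "\<And>k. 0 \<le> w k" "(w has_sum 1) UNIV" "\<And>m. ((\<lambda>k. w k * shift_vec k q m) has_sum p m) UNIV"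
    by blast
  then interpret shift_mixture p q w using assms by unfold_locales
  show "\<exists>E. deterministic_u1_operation E \<and> E (sqrt_state_proj p) = sqrt_state_proj q"
    using deterministic_channel channel_state by blast
qed

end
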